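(* Let $(G,\cdot)$ be a loop with identity $e$ and let $(H,\cdot)$ be a non-trivial subloop of $G$ such that $(xs\cdot z)s=x(sz\cdot s)$ for all $x,z\in G$ and $s\in H$. Then $$xs^n=xs^{n-1}\cdot s=xs\cdot s^{n-1}$$ for all $x\in G$, $s\in H$ and $n\in\mathbb{Z}$.
   Context: Juxtaposition binds more tightly than $\cdot$. For $s\in H$, the left and right inverses of $s$ coincide under the hypothesis; denote this common inverse by $s^{-1}$ (so $ss^{-1}=s^{-1}s=e$). Powers of $s\in H$ are defined by $s^0=e$, $s^n=s^{n-1}\cdot s$ for $n>0$, and $s^n=(s^{-1})^{|n|}$ for $n<0$. *)

theory Defs
  imports Main
begin

definition loop :: "'a set \<Rightarrow> ('a \<Rightarrow> 'a \<Rightarrow> 'a) \<Rightarrow> 'a \<Rightarrow> bool" where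
  "loop G m e \<longleftrightarrow>
     e \<in> G \<and>
     (\<forall>x\<in>G. \<forall>y\<in>G. m x y \<in> G) \<and>
     (\<forall>x\<in>G. m e x = x \<and> m x e = x) \<and>
     (\<forall>a\<in>G. \<forall>b\<in>G. \<exists>!x. x \<in> G \<and> m a x = b) \<and>
     (\<forall>a\<in>G. \<forall>b\<in>G. \<exists>!y. y \<in> G \<and> m y a = b)"

definition subloop :: "'a set \<Rightarrow> 'a set \<Rightarrow> ('a \<Rightarrow> 'a \<Rightarrow> 'a) \<Rightarrow> 'a \<Rightarrow> bool" where
  "subloop H G m e \<longleftrightarrow> H \<subseteq> G \<and> loop H m e"

text \<open>The inverse of s (taken as the unique right inverse, s s^-1 = e; under the
hypothesis of the theorem it coincides with the left inverse).\<close>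
definition loop_inv :: "'a set \<Rightarrow> ('a \<Rightarrow> 'a \<Rightarrow> 'a) \<Rightarrow> 'a \<Rightarrow> 'a \<Rightarrow> 'a" where
  "loop_inv G m e s = (THE y. y \<in> G \<and> m s y = e)"

fun loop_npow :: "('a \<Rightarrow> 'a \<Rightarrow> 'a) \<Rightarrow> 'a \<Rightarrow> 'a \<Rightarrow> nat \<Rightarrow> 'a" where
  "loop_npow m e s 0 = e"
| "loop_npow m e s (Suc n) = m (loop_npow m e s n) s"

definition loop_ipow :: "'a set \<Rightarrow> ('a \<Rightarrow> 'a \<Rightarrow> 'a) \<Rightarrow> 'a \<Rightarrow> 'a \<Rightarrow> int \<Rightarrow> 'a" where
  "loop_ipow G m e s n =
     (if 0 \<le> n then loop_npow m e s (nat n)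
      else loop_npow m e (loop_inv G m e s) (nat (- n)))"

end

theory Submission
  imports Defs
begin

text \<open>For a fixed s the hypothesis is a right Bol identity with s in the outer
positions. By induction it yields the power identities for s^n with n \<ge> 0. The
identity also forces the right inverse t of s to be a two-sided inverse and makes
right multiplication by t undo right multiplication by s (and vice versa), since
t lies in H and therefore satisfies the identity as well; the case n \<le> 0 is then
the case n \<ge> 0 for t, with these cancellations.\<close>

definition right_bol_at :: "'a set \<Rightarrow> ('a \<Rightarrow> 'a \<Rightarrow> 'a) \<Rightarrow> 'a \<Rightarrow> bool" where
  "right_bol_at G m s \<longleftrightarrow> (\<forall>x\<in>G. \<forall>z\<in>G. m (m (m x s) z) s = m x (m (m s z) s))"

lemma right_bol_atD:
  "right_bol_at G m s \<Longrightarrow> x \<in> G \<Longrightarrow> z \<in> G \<Longrightarrow> m (m (m x s) z) s = m x (m (m s z) s)"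
  unfolding right_bol_at_def by blast

context
  fixes G :: "'a set" and m :: "'a \<Rightarrow> 'a \<Rightarrow> 'a" and e :: 'a
  assumes L: "loop G m e"
begin

lemma loop_unit_closed: "e \<in> G"
  using L unfolding loop_def by (elim conjE)

lemma loop_mult_closed: "a \<in> G \<Longrightarrow> b \<in> G \<Longrightarrow> m a b \<in> G"
  using L unfolding loop_def by (elim conjE) simp

lemma loop_left_unit: "a \<in> G \<Longrightarrow> m e a = a"
  using L unfolding loop_def by (elim conjE) simp

lemma loop_right_unit: "a \<in> G \<Longrightarrow> m a e = a"
  using L unfolding loop_def by (elim conjE) simp

lemma loop_left_div_unique: "a \<in> G \<Longrightarrow> b \<in> G \<Longrightarrow> \<exists>!y. y \<in> G \<and> m a y = b"
  using L unfolding loop_def by (elim conjE) simp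

lemma loop_right_div_unique: "a \<in> G \<Longrightarrow> b \<in> G \<Longrightarrow> \<exists>!y. y \<in> G \<and> m y a = b"
  using L unfolding loop_def by (elim conjE) simp

lemma loop_ex_left_inverse: "a \<in> G \<Longrightarrow> \<exists>l\<in>G. m l a = e"
  using ex1_implies_ex[OF loop_right_div_unique[OF _ loop_unit_closed]] by blast

lemma loop_left_cancel:
  assumes "a \<in> G" "y \<in> G" "z \<in> G" "m a y = m a z"
  shows "y = z"
  using loop_left_div_unique[OF assms(1) loop_mult_closed[OF assms(1,2)]] assms(2-4) by metis

lemma loop_right_cancel:
  assumes "a \<in> G" "y \<in> G" "z \<in> G" "m y a = m z a"
  shows "y = z"
  using loop_right_div_unique[OF assms(1) loop_mult_closed[OF assms(2,1)]] assms(2-4) by metis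

lemma loop_npow_closed: "s \<in> G \<Longrightarrow> loop_npow m e s k \<in> G"
  by (induction k) (auto intro: loop_mult_closed loop_unit_closed)

lemma loop_inv_eqI:
  assumes "s \<in> G" "t \<in> G" "m s t = e"
  shows "loop_inv G m e s = t"
  unfolding loop_inv_def
  using assms loop_left_cancel[of s] by (intro the_equality) auto

lemma right_bol_npow_Suc:
  assumes s: "s \<in> G" and B: "right_bol_at G m s" and x: "x \<in> G"
  shows "m x (loop_npow m e s (Suc k)) = m (m x (loop_npow m e s k)) s \<and>
         m (m x s) (loop_npow m e s k) = m x (loop_npow m e s (Suc k))"
  using x
proof (induction k arbitrary: x)
  case 0
  then show ?case using s by (simp add: loop_left_unit loop_right_unit loop_mult_closed)
next
  case (Suc k)
  let ?p = "loop_npow m e s"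
  have pk: "?p k \<in> G" using s by (rule loop_npow_closed)
  have s_p: "m s (?p k) = ?p (Suc k)"
    using Suc.IH[OF loop_unit_closed] s loop_npow_closed[OF s, of "Suc k"]
    by (simp add: loop_left_unit loop_right_unit)
  have step: "m x (?p (Suc (Suc k))) = m (m x (?p (Suc k))) s" if x: "x \<in> G" for x
  proof -
    have "m x (?p (Suc (Suc k))) = m x (m (m s (?p k)) s)" using s_p by simp
    also have "\<dots> = m (m (m x s) (?p k)) s" using right_bol_atD[OF B x pk] by simp
    also have "\<dots> = m (m x (?p (Suc k))) s" using Suc.IH[OF x] by simp
    finally show ?thesis .
  qed
  have "m (m x s) (?p (Suc k)) = m (m (m x s) (?p k)) s"
    using Suc.IH[OF loop_mult_closed[OF Suc.prems s]] by simp
  also have "\<dots> = m (m x (?p (Suc k))) s" using Suc.IH[OF Suc.prems] by simp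
  finally show ?case using step[OF Suc.prems] by simp
qed

lemma right_bol_cancel:
  assumes s: "s \<in> G" and u: "u \<in> G" and su: "m s u = e"
    and B: "right_bol_at G m s" and x: "x \<in> G"
  shows "m (m x s) u = x"
proof -
  have "m (m (m x s) u) s = m x (m (m s u) s)" using right_bol_atD[OF B x u] .
  also have "\<dots> = m x s" using su s by (simp add: loop_left_unit)
  finally show ?thesis
    using loop_right_cancel s x loop_mult_closed[OF loop_mult_closed[OF x s] u] by blast
qed

lemma right_bol_inverse_commute:
  assumes s: "s \<in> G" and t: "t \<in> G" and st: "m s t = e" and B: "right_bol_at G m s"
  shows "m t s = e"
proof -
  obtain l where l: "l \<in> G" "m l s = e" using loop_ex_left_inverse[OF s] by blast
  have "m (m (m l s) t) s = m l (m (m s t) s)" using right_bol_atD[OF B l(1) t] .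
  then show ?thesis using l st s t by (simp add: loop_left_unit)
qed

lemma right_bol_npow_inverse:
  assumes s: "s \<in> G" and t: "t \<in> G" and st: "m s t = e" and ts: "m t s = e"
    and Bs: "right_bol_at G m s" and Bt: "right_bol_at G m t" and x: "x \<in> G"
  shows "m x (loop_npow m e t k) = m (m x (loop_npow m e t (Suc k))) s \<and>
         m (m x (loop_npow m e t (Suc k))) s = m (m x s) (loop_npow m e t (Suc k))"
proof -
  let ?q = "loop_npow m e t"
  have xq: "m x (?q k) \<in> G" using loop_mult_closed[OF x loop_npow_closed[OF t]] .
  have "m (m x (?q (Suc k))) s = m x (?q k)"
    using right_bol_npow_Suc[OF t Bt x] right_bol_cancel[OF t s ts Bt xq] by simp
  moreover have "m (m x s) (?q (Suc k)) = m x (?q k)"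
    using right_bol_npow_Suc[OF t Bt loop_mult_closed[OF x s]] right_bol_cancel[OF s t st Bs x]
    by simp
  ultimately show ?thesis by simp
qed

end

lemma subloop_loop_inv:
  assumes L: "loop G m e" and H: "subloop H G m e" and s: "s \<in> H"
  shows "loop_inv G m e s \<in> H" and "m s (loop_inv G m e s) = e"
proof -
  have HG: "H \<subseteq> G" and LH: "loop H m e" using H unfolding subloop_def by auto
  obtain t where t: "t \<in> H" "m s t = e"
    using loop_left_div_unique[OF LH s loop_unit_closed[OF LH]] by blast
  have "loop_inv G m e s = t" using loop_inv_eqI[OF L] HG s t by blast
  then show "loop_inv G m e s \<in> H" and "m s (loop_inv G m e s) = e" using t by simp_all
qed

theorem theorem3p2:
  fixes G H :: "'a set" and m :: "'a \<Rightarrow> 'a \<Rightarrow> 'a" and e :: 'a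
  assumes "loop G m e"
    and "subloop H G m e"
    and "H \<noteq> {e}"
    and "\<forall>x\<in>G. \<forall>z\<in>G. \<forall>s\<in>H. m (m (m x s) z) s = m x (m (m s z) s)"
  shows "\<forall>x\<in>G. \<forall>s\<in>H. \<forall>n::int.
           m x (loop_ipow G m e s n) = m (m x (loop_ipow G m e s (n - 1))) s \<and>
           m (m x (loop_ipow G m e s (n - 1))) s = m (m x s) (loop_ipow G m e s (n - 1))"
proof (intro ballI allI)
  fix x s and n :: int
  assume x: "x \<in> G" and sH: "s \<in> H"
  have HG: "H \<subseteq> G" using assms(2) unfolding subloop_def by blast
  have bol: "right_bol_at G m r" if "r \<in> H" for r
    using assms(4) that unfolding right_bol_at_def by blast
  define t where "t = loop_inv G m e s"
  have tH: "t \<in> H" and st: "m s t = e"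
    using subloop_loop_inv[OF assms(1,2) sH] unfolding t_def by simp_all
  have s: "s \<in> G" and t: "t \<in> G" using sH tH HG by auto
  have ts: "m t s = e" using right_bol_inverse_commute[OF assms(1) s t st bol[OF sH]] .
  show "m x (loop_ipow G m e s n) = m (m x (loop_ipow G m e s (n - 1))) s \<and>
        m (m x (loop_ipow G m e s (n - 1))) s = m (m x s) (loop_ipow G m e s (n - 1))"
  proof (cases "n > 0")
    case True
    then have "loop_ipow G m e s n = loop_npow m e s (Suc (nat (n - 1)))"
      and "loop_ipow G m e s (n - 1) = loop_npow m e s (nat (n - 1))"
      unfolding loop_ipow_def by (simp_all add: Suc_nat_eq_nat_zadd1)
    then show ?thesis using right_bol_npow_Suc[OF assms(1) s bol[OF sH] x] by simp
  next
    case False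
    then have "loop_ipow G m e s n = loop_npow m e t (nat (- n))"
      and "loop_ipow G m e s (n - 1) = loop_npow m e t (Suc (nat (- n)))"
      unfolding loop_ipow_def t_def by (auto simp: nat_diff_distrib' Suc_nat_eq_nat_zadd1)
    then show ?thesis
      using right_bol_npow_inverse[OF assms(1) s t st ts bol[OF sH] bol[OF tH] x] by simp
  qed
qed

end
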